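(* For every $n\ge 1$, $$R_n(x,y,z,t) = \sum_{T \in \mathcal{C}_{n+1}} (y+1)^{\mathrm{impe}(T)-\mathrm{impp}(T)}\,(y+t)^{\mathrm{impp}(T)}\, x^{\deg_T(1)-1}\, z^{\mathrm{lead}(T)-\deg_T(1)-1}.$$
   Context: Polynomials $Q_n(x,y,z,t)$ are defined by $Q_1=1$ and $Q_{n+1} = \left[x+nz+(y+t)\left(n+y\,\partial_y\right)\right]Q_n$, and $R_n(x,y,z,t) := Q_n(x,y+1,z,t-1)$. $\mathcal{C}_m$ is the set of Cayley trees on $[m]$ (trees with vertex set labelled bijectively by $[m]$) rooted at $1$; edges $(i,j)$ are oriented from parent $i$ to child $j$, and $\lambda_T$ denotes the label. For a vertex $v$, $\beta_T(v)$ is the smallest label among the descendants of $v$ ($v$ included). An edge $(i,j)$ is improper if $\lambda_T(i)>\beta_T(j)$, proper otherwise; $\mathrm{impe}(T)$ is the number of improper edges. A vertex is an improper parent if it has at least one improper child; $\mathrm{impp}(T)$ is the number of improper parents. $\deg_T(1)$ is the degree of the root. For a vertex $i$ with root-to-$i$ path $L(i)=(1=a_0,\dots,a_k=i)$, its greater ancestors path is the longest suffix $(a_p,\dots,a_k)$ of $L(i)$ whose vertices $j$ all satisfy $\lambda_T(j)\ge\lambda_T(i)$; $i$ is leading if $\beta_T(a_p)=\lambda_T(i)$; $\mathrm{lead}(T)$ is the number of leading vertices. *)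

theory Defs
  imports "HOL-Computational_Algebra.Polynomial"
begin

(* The operator y*\<partial>_y is rendered with the formal
   derivative pderiv.  Index 0 is unused (Q_0 := 0). *)
fun Qpoly :: "nat \<Rightarrow> real \<Rightarrow> real \<Rightarrow> real \<Rightarrow> real poly" where
  "Qpoly 0 x z t = 0"
| "Qpoly (Suc 0) x z t = 1"
| "Qpoly (Suc (Suc n)) x z t =
     (let q = Qpoly (Suc n) x z t; m = real (Suc n) in
       [: x + m * z + t * m, m :] * q + [: t, 1 :] * [: 0, 1 :] * pderiv q)"

definition Q :: "nat \<Rightarrow> real \<Rightarrow> real \<Rightarrow> real \<Rightarrow> real \<Rightarrow> real" where
  "Q n x y z t = poly (Qpoly n x z t) y"

definition R :: "nat \<Rightarrow> real \<Rightarrow> real \<Rightarrow> real \<Rightarrow> real \<Rightarrow> real" where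
  "R n x y z t = Q n x (y + 1) z (t - 1)"

(* Cayley trees on [m] rooted at 1, encoded by their parent function p:
   vertices 2..m have parent p v in 1..m, p is 0 outside 2..m, and every
   vertex reaches the root 1 by iterating p.  Labels are the vertices. *)
definition cayley_trees :: "nat \<Rightarrow> (nat \<Rightarrow> nat) set" where
  "cayley_trees m = {p. (\<forall>v. v \<notin> {2..m} \<longrightarrow> p v = 0)
      \<and> (\<forall>v\<in>{2..m}. p v \<in> {1..m})
      \<and> (\<forall>v\<in>{1..m}. \<exists>k. (p ^^ k) v = 1)}"

definition desc :: "nat \<Rightarrow> (nat \<Rightarrow> nat) \<Rightarrow> nat \<Rightarrow> nat set" where
  "desc m p v = {w \<in> {1..m}. \<exists>k. (p ^^ k) w = v}"

definition beta :: "nat \<Rightarrow> (nat \<Rightarrow> nat) \<Rightarrow> nat \<Rightarrow> nat" where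
  "beta m p v = Min (desc m p v)"

definition impe :: "nat \<Rightarrow> (nat \<Rightarrow> nat) \<Rightarrow> nat" where
  "impe m p = card {j \<in> {2..m}. p j > beta m p j}"

definition impp :: "nat \<Rightarrow> (nat \<Rightarrow> nat) \<Rightarrow> nat" where
  "impp m p = card {i \<in> {1..m}. \<exists>j\<in>{2..m}. p j = i \<and> i > beta m p j}"

definition root_deg :: "nat \<Rightarrow> (nat \<Rightarrow> nat) \<Rightarrow> nat" where
  "root_deg m p = card {j \<in> {2..m}. p j = 1}"

(* depth of i: the root-to-i path is ((p^^d) i, ..., (p^^0) i) *)
definition depth :: "(nat \<Rightarrow> nat) \<Rightarrow> nat \<Rightarrow> nat" where
  "depth p i = (LEAST k. (p ^^ k) i = 1)"

(* top vertex a_p of the greater ancestors path of i *)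
definition gap_top :: "(nat \<Rightarrow> nat) \<Rightarrow> nat \<Rightarrow> nat" where
  "gap_top p i = (p ^^ (GREATEST q. q \<le> depth p i \<and> (\<forall>k\<le>q. i \<le> (p ^^ k) i))) i"

definition leading :: "nat \<Rightarrow> (nat \<Rightarrow> nat) \<Rightarrow> nat \<Rightarrow> bool" where
  "leading m p i \<longleftrightarrow> beta m p (gap_top p i) = i"

definition lead :: "nat \<Rightarrow> (nat \<Rightarrow> nat) \<Rightarrow> nat" where
  "lead m p = card {i \<in> {1..m}. leading m p i}"

end

theory Submission
  imports Defs
begin

(* Every Cayley tree on [m+1] arises from exactly one tree on [m] by inserting the largest
   vertex N = m+1 at one of m + (m-1) + impe positions: N hangs as a leaf below a vertex v,
   or N subdivides the edge above a non-root vertex c, or, for an improper edge (i, j), N is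
   put above i and adopts the children of i whose minimal descendant is at most beta j.
   Conversely N is removed by letting its child with the largest minimal descendant take its
   place.  Since lead = m - impe, the exponent of z counts the proper edges away from the root,
   and the weight changes by the factor x for a leaf below the root, z for any other leaf,
   y+t for a subdivision, and y+1 or y+t for the improper edge (i, j) according as j is or is
   not the improper child of i with the largest minimal descendant.  The factors sum to
   x + (m-1)(z+y+t) + impp (y+1) + (impe - impp)(y+t), and the last two terms are what
   (y+t)(y+1) d/dy does to (y+1)^(impe-impp) (y+t)^impp.  This is the recurrence of Q_n after
   the substitution y -> y+1, t -> t-1, and both sides equal 1 for n = 1. *)

section \<open>Ancestors in a parent function\<close>

lemma funpow_split_le: "d \<le> k \<Longrightarrow> (f ^^ k) x = (f ^^ (k - d)) ((f ^^ d) x)"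
  by (metis funpow_add le_add_diff_inverse2 comp_apply)

definition ancestors :: "(nat \<Rightarrow> nat) \<Rightarrow> nat \<Rightarrow> nat set" where
  "ancestors p u = range (\<lambda>k. (p ^^ k) u)"

lemma ancestors_unfold: "ancestors p u = insert u (ancestors p (p u))"
proof (intro equalityI subsetI)
  fix w assume "w \<in> ancestors p u"
  then obtain k where "w = (p ^^ k) u" by (auto simp: ancestors_def)
  then show "w \<in> insert u (ancestors p (p u))"
    by (cases k) (auto simp: ancestors_def funpow_Suc_right simp del: funpow.simps)
next
  have "(p ^^ k) (p u) = (p ^^ Suc k) u" for k
    by (simp add: funpow_Suc_right del: funpow.simps)
  then show "w \<in> ancestors p u" if "w \<in> insert u (ancestors p (p u))" for w
    using that unfolding ancestors_def by (auto simp del: funpow.simps) (metis funpow_0 rangeI)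
qed

lemma ex_funpow_iff_ancestors: "(\<exists>k. (p ^^ k) u = w) \<longleftrightarrow> w \<in> ancestors p u"
  by (auto simp: ancestors_def)

lemma self_in_ancestors: "u \<in> ancestors p u"
  by (subst ancestors_unfold) simp

lemma ancestors_subset: "w \<in> ancestors p u \<Longrightarrow> ancestors p w \<subseteq> ancestors p u"
proof
  fix v assume "w \<in> ancestors p u" "v \<in> ancestors p w"
  then obtain a b where "w = (p ^^ a) u" "v = (p ^^ b) w" by (auto simp: ancestors_def)
  then have "v = (p ^^ (b + a)) u" by (simp add: funpow_add)
  then show "v \<in> ancestors p u" by (auto simp: ancestors_def)
qed

lemma parent_in_ancestors: "w \<in> ancestors p u \<Longrightarrow> p w \<in> ancestors p u"
  using ancestors_subset[of w p u] ancestors_unfold[of p w] self_in_ancestors[of "p w" p] by auto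

lemma ancestors_fixed_point: "p u = u \<Longrightarrow> ancestors p u = {u}"
proof -
  assume fixed: "p u = u"
  have "(p ^^ k) u = u" for k by (induction k) (auto simp: fixed)
  then show ?thesis by (auto simp: ancestors_def)
qed

lemma ancestors_cong:
  assumes "\<And>w. w \<in> ancestors p u \<Longrightarrow> q w = p w"
  shows "ancestors q u = ancestors p u"
proof -
  have "(q ^^ k) u = (p ^^ k) u" for k
  proof (induction k)
    case (Suc k)
    have "(p ^^ k) u \<in> ancestors p u" by (auto simp: ancestors_def)
    then show ?case using Suc assms by simp
  qed simp
  then show ?thesis by (simp add: ancestors_def)
qed

lemma desc_eq_ancestors: "desc m p v = {w \<in> {1..m}. v \<in> ancestors p w}"
  by (auto simp: desc_def ancestors_def)

section \<open>Cayley trees\<close>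

locale cayley_tree =
  fixes m :: nat and p :: "nat \<Rightarrow> nat"
  assumes cayley: "p \<in> cayley_trees m"
begin

lemma parent_outside: "v \<notin> {2..m} \<Longrightarrow> p v = 0"
  using cayley by (auto simp: cayley_trees_def)

lemma parent_in_range: "v \<in> {2..m} \<Longrightarrow> p v \<in> {1..m}"
  using cayley by (auto simp: cayley_trees_def)

lemma root_in_ancestors: "v \<in> {1..m} \<Longrightarrow> 1 \<in> ancestors p v"
  using cayley unfolding cayley_trees_def by (auto simp: ex_funpow_iff_ancestors)

lemma parent_0 [simp]: "p 0 = 0"
  by (rule parent_outside) auto

lemma parent_root [simp]: "p 1 = 0"
  by (rule parent_outside) auto

lemmas parent_root_Suc0 [simp] = parent_root[unfolded One_nat_def]

lemma ancestors_0 [simp]: "ancestors p 0 = {0}"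
  by (rule ancestors_fixed_point) simp

lemma ancestors_root [simp]: "ancestors p 1 = {1, 0}"
  by (subst ancestors_unfold) simp

lemmas ancestors_root_Suc0 [simp] = ancestors_root[unfolded One_nat_def]

lemma parent_le: "v \<le> m \<Longrightarrow> p v \<le> m"
  using parent_in_range[of v] parent_outside[of v] by (cases "v \<in> {2..m}") auto

lemma funpow_le: "u \<le> m \<Longrightarrow> (p ^^ k) u \<le> m"
  by (induction k) (auto simp: parent_le)

lemma ancestors_le: "u \<le> m \<Longrightarrow> ancestors p u \<subseteq> {..m}"
  using funpow_le by (auto simp: ancestors_def)

lemma funpow_0: "(p ^^ k) 0 = 0"
  by (induction k) auto

lemma funpow_Suc_root: "(p ^^ Suc k) 1 = 0"
  using funpow_0[of k] by (simp add: funpow_Suc_right del: funpow.simps)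

lemma funpow_depth: "v \<in> {1..m} \<Longrightarrow> (p ^^ depth p v) v = 1"
  unfolding depth_def using root_in_ancestors[of v]
  by (auto simp: ancestors_def intro: LeastI)

lemma funpow_eq_root_iff:
  assumes "u \<in> {1..m}"
  shows "(p ^^ k) u = 1 \<longleftrightarrow> k = depth p u"
proof
  assume k: "(p ^^ k) u = 1"
  have "depth p u \<le> k" unfolding depth_def using k by (rule Least_le)
  moreover have "\<not> depth p u < k"
  proof
    assume less: "depth p u < k"
    have "(p ^^ k) u = (p ^^ (k - depth p u)) ((p ^^ depth p u) u)"
      using less by (simp add: funpow_split_le)
    also have "\<dots> = 0"
      using less funpow_depth[OF assms] funpow_Suc_root by (metis Suc_diff_Suc)
    finally show False using k by simp
  qed
  ultimately show "k = depth p u" by simp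
qed (use funpow_depth[OF assms] in simp)

lemma depth_funpow:
  assumes u: "u \<in> {1..m}" and w: "w = (p ^^ l) u" "w \<in> {1..m}"
  shows "l \<le> depth p u \<and> depth p w = depth p u - l"
proof -
  let ?d = "depth p u"
  have l: "l \<le> ?d"
  proof (rule ccontr)
    assume "\<not> l \<le> ?d"
    then have "w = (p ^^ (l - ?d)) ((p ^^ ?d) u)" using w by (simp add: funpow_split_le)
    also have "\<dots> = 0"
      using \<open>\<not> l \<le> ?d\<close> funpow_depth[OF u] funpow_Suc_root by (metis Suc_diff_Suc not_le)
    finally show False using w by simp
  qed
  have "(p ^^ (?d - l)) w = 1"
    using w l funpow_split_le[of l ?d p u] funpow_depth[OF u] by simp
  then show ?thesis using funpow_eq_root_iff[OF w(2)] l by simp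
qed

lemma depth_ancestor_less:
  assumes u: "u \<in> {1..m}" and w: "w \<in> ancestors p (p u)" "w \<in> {1..m}"
  shows "depth p w < depth p u"
proof -
  obtain k where "w = (p ^^ k) (p u)" using w by (auto simp: ancestors_def)
  then have "w = (p ^^ Suc k) u" by (simp add: funpow_Suc_right del: funpow.simps)
  with depth_funpow[OF u this w(2)] show ?thesis by simp
qed

lemma ancestors_induct [consumes 1, case_names step]:
  assumes "u \<in> {1..m}"
    and step: "\<And>u. u \<in> {1..m} \<Longrightarrow>
      (\<And>w. w \<in> ancestors p (p u) \<Longrightarrow> w \<in> {1..m} \<Longrightarrow> P w) \<Longrightarrow> P u"
  shows "P u"
  using assms(1)
proof (induction "depth p u" arbitrary: u rule: less_induct)
  case less
  show ?case
    by (rule step[OF less.prems]) (rule less.hyps, rule depth_ancestor_less[OF less.prems], auto)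
qed

lemma not_in_ancestors_parent: "u \<in> {1..m} \<Longrightarrow> u \<notin> ancestors p (p u)"
  using depth_ancestor_less by blast

lemma parent_neq_self: "u \<in> {1..m} \<Longrightarrow> p u \<noteq> u"
  using not_in_ancestors_parent self_in_ancestors by metis

lemma funpow_in_range:
  assumes "i \<in> {1..m}" "k \<le> depth p i"
  shows "(p ^^ k) i \<in> {1..m}"
proof -
  have "(p ^^ k) i \<noteq> 0"
  proof
    assume "(p ^^ k) i = 0"
    then have "(p ^^ depth p i) i = 0"
      using funpow_split_le[OF assms(2), of p i] funpow_0 by simp
    then show False using funpow_depth[OF assms(1)] by simp
  qed
  then show ?thesis using funpow_le[of i k] assms(1) by auto
qed

lemma desc_subset: "desc m p v \<subseteq> {1..m}"
  by (auto simp: desc_def)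

lemma finite_desc: "finite (desc m p v)"
  using desc_subset finite_subset by blast

lemma self_in_desc: "v \<in> {1..m} \<Longrightarrow> v \<in> desc m p v"
  by (auto simp: desc_eq_ancestors self_in_ancestors)

lemma beta_in_desc: "v \<in> {1..m} \<Longrightarrow> beta m p v \<in> desc m p v"
  unfolding beta_def using self_in_desc finite_desc by (metis Min_in empty_iff)

lemma beta_le: "w \<in> desc m p v \<Longrightarrow> beta m p v \<le> w"
  unfolding beta_def using finite_desc by (rule Min_le)

lemma beta_le_self: "v \<in> {1..m} \<Longrightarrow> beta m p v \<le> v"
  using beta_le self_in_desc by blast

lemma beta_in_range: "v \<in> {1..m} \<Longrightarrow> beta m p v \<in> {1..m}"
  using beta_in_desc desc_subset by blast

lemma desc_child_subset: "c \<in> {2..m} \<Longrightarrow> desc m p c \<subseteq> desc m p (p c)"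
  unfolding desc_eq_ancestors using parent_in_ancestors by blast

lemma beta_parent_le: "c \<in> {2..m} \<Longrightarrow> beta m p (p c) \<le> beta m p c"
  using desc_child_subset beta_in_desc[of c] beta_le by (auto simp: subset_iff)

lemma parent_notin_desc: "c \<in> {2..m} \<Longrightarrow> p c \<notin> desc m p c"
  using not_in_ancestors_parent[of c] by (auto simp: desc_eq_ancestors dest: ancestors_subset)

lemma beta_neq_parent: "c \<in> {2..m} \<Longrightarrow> beta m p c \<noteq> p c"
  using parent_notin_desc beta_in_desc[of c] by force

lemma desc_siblings_disjoint:
  assumes c: "c \<in> {2..m}" "c' \<in> {2..m}" "p c = p c'" "c \<noteq> c'"
  shows "desc m p c \<inter> desc m p c' = {}"
proof (rule ccontr)
  assume "desc m p c \<inter> desc m p c' \<noteq> {}"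
  then obtain u a b where u: "u \<in> {1..m}" "c = (p ^^ a) u" "c' = (p ^^ b) u"
    by (auto simp: desc_def)
  have "a \<noteq> b" using u c by auto
  have "(p ^^ Suc a) u = (p ^^ Suc b) u" using u c(3) by simp
  then show False
  proof (cases "a < b")
    case True
    then have "c' \<in> ancestors p (p c')"
      using u c(3) funpow_split_le[of "Suc a" b p u] by (auto simp: ancestors_def)
    then show False using not_in_ancestors_parent[of c'] c by auto
  next
    case False
    then have "c \<in> ancestors p (p c)"
      using u c(3) \<open>a \<noteq> b\<close> funpow_split_le[of "Suc b" a p u] by (auto simp: ancestors_def)
    then show False using not_in_ancestors_parent[of c] c by auto
  qed
qed

lemma beta_siblings_neq:
  assumes "c \<in> {2..m}" "c' \<in> {2..m}" "p c = p c'" "c \<noteq> c'"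
  shows "beta m p c \<noteq> beta m p c'"
  using desc_siblings_disjoint[OF assms] beta_in_desc[of c] beta_in_desc[of c'] assms by force

lemma desc_through_child:
  assumes i: "i \<in> {1..m}" and u: "u \<in> desc m p i" "u \<noteq> i"
  obtains c where "c \<in> {2..m}" "p c = i" "u \<in> desc m p c"
proof -
  obtain k where k: "(p ^^ k) u = i" and um: "u \<in> {1..m}" using u by (auto simp: desc_def)
  with u obtain k' where k': "k = Suc k'" by (cases k) auto
  define c where "c = (p ^^ k') u"
  have pc: "p c = i" using k k' by (simp add: c_def)
  have "c \<le> m" using funpow_le um by (simp add: c_def)
  moreover have "c \<noteq> 0" "c \<noteq> 1" using pc i by (metis atLeastAtMost_iff not_one_le_zero parent_0 parent_root)+
  ultimately have "c \<in> {2..m}" by auto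
  moreover have "u \<in> desc m p c" using um by (auto simp: desc_def c_def)
  ultimately show ?thesis using pc that by blast
qed

lemma ex_root_child: "u \<in> {2..m} \<Longrightarrow> \<exists>c\<in>{2..m}. p c = 1"
proof -
  assume "u \<in> {2..m}"
  then have "u \<in> {1..m}" "u \<noteq> 1" by auto
  then show ?thesis
  proof (induction u rule: ancestors_induct)
    case (step u)
    show ?case
    proof (cases "p u = 1")
      case False
      have "p u \<in> {1..m}" using parent_in_range step by auto
      then show ?thesis using step.IH[of "p u"] False self_in_ancestors by blast
    qed (use step in auto)
  qed
qed

lemma root_deg_pos: "2 \<le> m \<Longrightarrow> 1 \<le> root_deg m p"
  unfolding root_deg_def using ex_root_child[of 2]
  by (auto simp: Suc_le_eq card_gt_0_iff)

end

lemma finite_cayley_trees: "finite (cayley_trees m)"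
proof (rule finite_subset)
  show "cayley_trees m \<subseteq> {f. \<forall>v. (v \<in> {2..m} \<longrightarrow> f v \<in> {1..m}) \<and> (v \<notin> {2..m} \<longrightarrow> f v = 0)}"
    by (auto simp: cayley_trees_def)
qed (rule finite_set_of_finite_funs; simp)

section \<open>Improper edges and leading vertices\<close>

definition children :: "nat \<Rightarrow> (nat \<Rightarrow> nat) \<Rightarrow> nat \<Rightarrow> nat set" where
  "children m p v = {c \<in> {2..m}. p c = v}"

definition improper_children :: "nat \<Rightarrow> (nat \<Rightarrow> nat) \<Rightarrow> nat set" where
  "improper_children m p = {j \<in> {2..m}. beta m p j < p j}"

definition improper_parents :: "nat \<Rightarrow> (nat \<Rightarrow> nat) \<Rightarrow> nat set" where
  "improper_parents m p = {i \<in> {1..m}. \<exists>j\<in>{2..m}. p j = i \<and> beta m p j < i}"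

definition root_children :: "nat \<Rightarrow> (nat \<Rightarrow> nat) \<Rightarrow> nat set" where
  "root_children m p = {j \<in> {2..m}. p j = 1}"

lemma improper_parents_iff:
  "v \<in> improper_parents m p \<longleftrightarrow> v \<in> {1..m} \<and> (\<exists>b\<in>beta m p ` children m p v. b < v)"
  by (auto simp: improper_parents_def children_def)

lemma impe_eq_card: "impe m p = card (improper_children m p)"
  by (simp add: impe_def improper_children_def)

lemma impp_eq_card: "impp m p = card (improper_parents m p)"
  by (simp add: impp_def improper_parents_def)

lemma root_deg_eq_card: "root_deg m p = card (root_children m p)"
  by (simp add: root_deg_def root_children_def)

lemma finite_improper_children: "finite (improper_children m p)"
  by (simp add: improper_children_def)

lemma finite_improper_parents: "finite (improper_parents m p)"
  by (simp add: improper_parents_def)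

lemma finite_root_children: "finite (root_children m p)"
  by (simp add: root_children_def)

definition gap_length :: "(nat \<Rightarrow> nat) \<Rightarrow> nat \<Rightarrow> nat" where
  "gap_length p i = (GREATEST q. q \<le> depth p i \<and> (\<forall>k\<le>q. i \<le> (p ^^ k) i))"

lemma gap_top_eq: "gap_top p i = (p ^^ gap_length p i) i"
  by (simp add: gap_top_def gap_length_def)

lemma gap_length_le: "gap_length p i \<le> depth p i \<and> (\<forall>k\<le>gap_length p i. i \<le> (p ^^ k) i)"
  unfolding gap_length_def by (rule GreatestI_nat[where k=0 and b="depth p i"]) auto

lemma gap_length_greatest:
  "q \<le> depth p i \<Longrightarrow> (\<forall>k\<le>q. i \<le> (p ^^ k) i) \<Longrightarrow> q \<le> gap_length p i"
  unfolding gap_length_def by (rule Greatest_le_nat[where b="depth p i"]) auto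

lemma gap_length_stop:
  assumes "gap_length p i < depth p i"
  shows "(p ^^ Suc (gap_length p i)) i < i"
proof (rule ccontr)
  assume "\<not> (p ^^ Suc (gap_length p i)) i < i"
  then have "\<forall>k\<le>Suc (gap_length p i). i \<le> (p ^^ k) i"
    using gap_length_le[of p i] by (auto simp: le_Suc_eq)
  then show False using gap_length_greatest[of "Suc (gap_length p i)" p i] assms by simp
qed

context cayley_tree
begin

lemma improper_parents_eq_image: "improper_parents m p = p ` improper_children m p"
  using parent_in_range by (auto simp: improper_parents_def improper_children_def)

lemma impp_le_impe: "impp m p \<le> impe m p"
  unfolding impp_eq_card impe_eq_card improper_parents_eq_image
  by (rule card_image_le) (simp add: improper_children_def)

lemma improper_children_disjoint_root_children:
  "improper_children m p \<inter> root_children m p = {}"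
proof -
  have "p j \<noteq> 1" if "j \<in> improper_children m p" for j
    using that beta_in_range[of j] by (auto simp: improper_children_def)
  then show ?thesis by (auto simp: root_children_def)
qed

lemma impe_root_deg_bound:
  assumes "1 \<le> m"
  shows "impe m p + root_deg m p + 1 \<le> m"
proof -
  have "improper_children m p \<union> root_children m p \<subseteq> {2..m}"
    by (auto simp: improper_children_def root_children_def)
  then have "card (improper_children m p \<union> root_children m p) \<le> m - 1"
    using card_mono[of "{2..m}"] by fastforce
  moreover have "card (improper_children m p \<union> root_children m p)
      = card (improper_children m p) + card (root_children m p)"
    using improper_children_disjoint_root_children
    by (intro card_Un_disjoint finite_improper_children finite_root_children)
  ultimately show ?thesis unfolding impe_eq_card root_deg_eq_card using assms by linarith
qed

lemma gap_top_in_range: "i \<in> {1..m} \<Longrightarrow> gap_top p i \<in> {1..m}"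
  using gap_length_le funpow_in_range by (simp add: gap_top_eq)

lemma gap_top_proper:
  assumes i: "i \<in> {1..m}" "beta m p (gap_top p i) = i"
  shows "gap_top p i = 1 \<or> p (gap_top p i) < beta m p (gap_top p i)"
proof (cases "gap_length p i < depth p i")
  case True
  have "p (gap_top p i) = (p ^^ Suc (gap_length p i)) i" by (simp add: gap_top_eq)
  then show ?thesis using gap_length_stop[OF True] i by simp
next
  case False
  then have "gap_length p i = depth p i" using gap_length_le[of p i] by simp
  then show ?thesis using funpow_depth[OF i(1)] by (simp add: gap_top_eq)
qed

lemma gap_top_beta:
  assumes u: "u \<in> {1..m}" "u = 1 \<or> p u < beta m p u"
  shows "gap_top p (beta m p u) = u"
proof -
  define i where "i = beta m p u"
  have "i \<in> desc m p u" using beta_in_desc[OF u(1)] by (simp add: i_def)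
  then obtain k where k: "(p ^^ k) i = u" and i: "i \<in> {1..m}" by (auto simp: desc_def)
  have k_le: "k \<le> depth p i" using depth_funpow[OF i k[symmetric] u(1)] by simp
  have "i \<le> (p ^^ l) i" if "l \<le> k" for l
  proof -
    have "(p ^^ (k - l)) ((p ^^ l) i) = u" using k funpow_split_le[OF that, of p i] by simp
    then have "(p ^^ l) i \<in> desc m p u"
      using funpow_in_range[OF i] that k_le by (auto simp: desc_def)
    then show ?thesis unfolding i_def by (rule beta_le)
  qed
  then have "k \<le> gap_length p i" using gap_length_greatest[OF k_le] by blast
  moreover have "\<not> Suc k \<le> gap_length p i"
  proof
    assume Suc_k: "Suc k \<le> gap_length p i"
    then have "(p ^^ Suc k) i \<in> {1..m}"
      using gap_length_le[of p i] funpow_in_range[OF i] le_trans by blast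
    then have "p u < i" using u(2) k by (auto simp: i_def)
    moreover have "i \<le> (p ^^ Suc k) i" using Suc_k gap_length_le[of p i] by auto
    ultimately show False using k by simp
  qed
  ultimately have "gap_length p i = k" by simp
  then show ?thesis using k by (simp add: gap_top_eq i_def)
qed

lemma lead_eq_card_proper: "lead m p = card {u \<in> {1..m}. u = 1 \<or> p u < beta m p u}"
proof -
  have "bij_betw (gap_top p) {i \<in> {1..m}. leading m p i} {u \<in> {1..m}. u = 1 \<or> p u < beta m p u}"
  proof (rule bij_betw_byWitness[where f'="beta m p"])
    show "gap_top p ` {i \<in> {1..m}. leading m p i} \<subseteq> {u \<in> {1..m}. u = 1 \<or> p u < beta m p u}"
    proof (rule image_subsetI)
      fix i assume "i \<in> {i \<in> {1..m}. leading m p i}"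
      then have i: "i \<in> {1..m}" "beta m p (gap_top p i) = i" by (auto simp: leading_def)
      show "gap_top p i \<in> {u \<in> {1..m}. u = 1 \<or> p u < beta m p u}"
        using gap_top_proper[OF i] gap_top_in_range[OF i(1)] by blast
    qed
    show "beta m p ` {u \<in> {1..m}. u = 1 \<or> p u < beta m p u} \<subseteq> {i \<in> {1..m}. leading m p i}"
      using gap_top_beta beta_in_range unfolding leading_def by fastforce
    show "\<forall>u\<in>{u \<in> {1..m}. u = 1 \<or> p u < beta m p u}. gap_top p (beta m p u) = u"
      using gap_top_beta by blast
  qed (simp add: leading_def)
  then show ?thesis unfolding lead_def by (rule bij_betw_same_card)
qed

lemma lead_eq:
  assumes m: "1 \<le> m"
  shows "lead m p = m - impe m p"
proof -
  have "{u \<in> {1..m}. u = 1 \<or> p u < beta m p u} = insert 1 ({2..m} - improper_children m p)"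
    using beta_neq_parent m by (force simp: improper_children_def)
  then have "lead m p = 1 + card ({2..m} - improper_children m p)"
    by (simp add: lead_eq_card_proper)
  also have "card ({2..m} - improper_children m p) = (m - 1) - impe m p"
    by (subst card_Diff_subset) (auto simp: improper_children_def impe_eq_card)
  finally show ?thesis using impe_root_deg_bound[OF m] by simp
qed

end

section \<open>Inserting the vertex m+1\<close>

lemma Min_insert_greater:
  "finite D \<Longrightarrow> D \<noteq> {} \<Longrightarrow> \<forall>d\<in>D. d < x \<Longrightarrow> Min (insert x D) = Min D"
  by (simp add: min_def) (metis Min_in less_le_not_le)

locale leaf_insertion = cayley_tree +
  fixes v :: nat
  assumes v: "v \<in> {1..m}"
begin

abbreviation "N \<equiv> Suc m"
abbreviation "q \<equiv> p(N := v)"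

lemma ancestors_leaf_old:
  assumes "u \<le> m"
  shows "ancestors q u = ancestors p u"
proof (rule ancestors_cong)
  fix w assume "w \<in> ancestors p u"
  then have "w \<noteq> N" using ancestors_le[OF assms] by auto
  then show "q w = p w" by simp
qed

lemma ancestors_leaf_new: "ancestors q N = insert N (ancestors p v)"
  using ancestors_unfold[of q N] ancestors_leaf_old[of v] v by simp

lemma leaf_cayley: "q \<in> cayley_trees N"
  unfolding cayley_trees_def
proof (intro CollectI conjI ballI allI impI)
  fix w assume "w \<notin> {2..N}"
  then show "q w = 0" using parent_outside[of w] v by auto
next
  fix w assume "w \<in> {2..N}"
  then show "q w \<in> {1..N}" using v parent_in_range[of w] by (cases "w = N") auto
next
  fix w assume w: "w \<in> {1..N}"
  have "1 \<in> ancestors q w"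
  proof (cases "w = N")
    case True
    then show ?thesis using ancestors_leaf_new root_in_ancestors[OF v] by auto
  next
    case False
    then show ?thesis using w ancestors_leaf_old[of w] root_in_ancestors[of w] by auto
  qed
  then show "\<exists>k. (q ^^ k) w = 1" by (simp add: ex_funpow_iff_ancestors)
qed

sublocale new: cayley_tree N q
  by unfold_locales (rule leaf_cayley)

lemma beta_leaf_old:
  assumes w: "w \<in> {1..m}"
  shows "beta N q w = beta m p w"
proof -
  have "desc N q w = desc m p w \<union> (if w \<in> ancestors q N then {N} else {})"
    unfolding desc_eq_ancestors using ancestors_leaf_old by (auto simp: le_Suc_eq)
  moreover have "desc m p w \<noteq> {}" "\<forall>d\<in>desc m p w. d < N"
    using self_in_desc[OF w] desc_subset[of w] by auto
  ultimately show ?thesis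
    unfolding beta_def using Min_insert_greater[OF finite_desc] by auto
qed

lemma beta_leaf_new: "beta N q N = N"
proof -
  have "N \<notin> ancestors q u" if "u \<in> {1..m}" for u
    using ancestors_leaf_old[of u] ancestors_le[of u] that by auto
  then have "desc N q N = {N}"
    unfolding desc_eq_ancestors using self_in_ancestors[of N q] by (auto simp: le_Suc_eq)
  then show ?thesis by (simp add: beta_def)
qed

lemma improper_children_leaf: "improper_children N q = improper_children m p"
  using beta_leaf_old beta_leaf_new v by (auto simp: improper_children_def le_Suc_eq)

lemma improper_parents_leaf: "improper_parents N q = improper_parents m p"
proof -
  have image_eq: "beta N q ` children N q w = beta m p ` children m p w \<union> (if w = v then {N} else {})"
    if "w \<in> {1..m}" for w
  proof -
    have "children N q w = children m p w \<union> (if w = v then {N} else {})"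
      using v that by (auto simp: children_def)
    moreover have "beta N q j = beta m p j" if "j \<in> children m p w" for j
      using that beta_leaf_old by (auto simp: children_def)
    ultimately show ?thesis using beta_leaf_new by auto
  qed
  have "q j \<noteq> N" if "j \<in> {2..N}" for j
    using that v parent_le[of j] by (cases "j = N") auto
  then have "N \<notin> improper_parents N q" by (auto simp: improper_parents_def)
  show ?thesis
  proof (rule set_eqI)
    fix w
    show "w \<in> improper_parents N q \<longleftrightarrow> w \<in> improper_parents m p"
    proof (cases "w \<in> {1..m}")
      case True
      then show ?thesis using image_eq[OF True] by (auto simp: improper_parents_iff)
    next
      case False
      then have "w = N \<or> w \<notin> {1..N}" by auto
      then show ?thesis
        using False \<open>N \<notin> improper_parents N q\<close> by (auto simp: improper_parents_iff)
    qed
  qed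
qed

lemma root_deg_leaf: "root_deg N q = root_deg m p + (if v = 1 then 1 else 0)"
proof -
  have "root_children N q = (if v = 1 then insert N (root_children m p) else root_children m p)"
    using v by (auto simp: root_children_def le_Suc_eq)
  moreover have "N \<notin> root_children m p" by (simp add: root_children_def)
  ultimately show ?thesis using finite_root_children[of m p] by (simp add: root_deg_eq_card)
qed

end

definition insert_above :: "nat \<Rightarrow> (nat \<Rightarrow> nat) \<Rightarrow> nat \<Rightarrow> nat set \<Rightarrow> nat \<Rightarrow> nat" where
  "insert_above m p i S =
     (\<lambda>v. if v = Suc m then p i else if v = i \<or> v \<in> S then Suc m else p v)"

locale subdivision = cayley_tree +
  fixes i :: nat and S :: "nat set"
  assumes i: "i \<in> {2..m}" and S: "S \<subseteq> children m p i"
begin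

abbreviation "N \<equiv> Suc m"
abbreviation "q \<equiv> insert_above m p i S"

lemma S_range: "S \<subseteq> {2..m}" "N \<notin> S" "i \<notin> S"
  using S i parent_neq_self[of i] by (auto simp: children_def)

lemma parent_i: "p i \<in> {1..m}"
  using parent_in_range i by auto

lemma q_new [simp]: "q N = p i"
  by (simp add: insert_above_def)

lemma q_i [simp]: "q i = N"
  using i by (simp add: insert_above_def)

lemma q_adopted: "c \<in> S \<Longrightarrow> q c = N"
  using S_range by (auto simp: insert_above_def)

lemma q_other: "v \<noteq> N \<Longrightarrow> v \<noteq> i \<Longrightarrow> v \<notin> S \<Longrightarrow> q v = p v"
  by (simp add: insert_above_def)

lemma q_0 [simp]: "q 0 = 0"
  using i S_range by (auto simp: insert_above_def)

lemma ancestors_q_parent_i: "ancestors q (p i) = ancestors p (p i)"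
proof (rule ancestors_cong)
  fix w assume w: "w \<in> ancestors p (p i)"
  have "w \<le> m" using w ancestors_le[of "p i"] parent_i by auto
  moreover have "w \<noteq> i" using w not_in_ancestors_parent[of i] i by auto
  moreover have "w \<notin> S"
  proof
    assume "w \<in> S"
    then have "i \<in> ancestors p (p i)"
      using w S parent_in_ancestors[of w p "p i"] by (auto simp: children_def)
    then show False using not_in_ancestors_parent[of i] i by auto
  qed
  ultimately show "q w = p w" by (simp add: q_other)
qed

lemma ancestors_q_new: "ancestors q N = insert N (ancestors p (p i))"
  using ancestors_unfold[of q N] ancestors_q_parent_i by simp

lemma ancestors_q_i: "ancestors q i = insert i (ancestors q N)"
  using ancestors_unfold[of q i] by simp

lemma ancestors_q_adopted: "c \<in> S \<Longrightarrow> ancestors q c = insert c (ancestors q N)"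
  using ancestors_unfold[of q c] q_adopted by simp

lemma ancestors_insert_above:
  assumes "u \<in> {1..m}"
  shows "ancestors q u = (ancestors p u \<union> (if i \<in> ancestors p u then {N} else {}))
    - (if \<exists>c\<in>S. c \<in> ancestors p u then {i} else {})"
  using assms
proof (induction u rule: ancestors_induct)
  case (step u)
  have i_notin: "i \<notin> ancestors p (p i)" "N \<notin> ancestors p (p i)"
    using not_in_ancestors_parent[of i] ancestors_le[of "p i"] i parent_i by auto
  have S_notin: "c \<notin> ancestors p (p i)" if "c \<in> S" for c
    using that S i_notin parent_in_ancestors[of c p "p i"] by (auto simp: children_def)
  have "u = 1 \<or> u \<in> {2..m}" using step.hyps by auto
  then consider "u = 1" | "u \<in> {2..m}" "u \<noteq> i" "u \<notin> S" | "u = i" | "u \<in> S"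
    by blast
  then show ?case
  proof cases
    case 1
    have "q 1 = 0" using i S_range by (auto simp: insert_above_def)
    then have "ancestors q 1 = {1, 0}"
      using ancestors_unfold[of q 1] ancestors_fixed_point[of q 0] by simp
    then show ?thesis using 1 i S_range by auto
  next
    case 2
    have "ancestors q u = insert u (ancestors q (p u))"
      using 2 ancestors_unfold[of q u] q_other[of u] by simp
    moreover have "p u \<in> {1..m}" using parent_in_range 2 by auto
    ultimately show ?thesis
      using step.IH[OF self_in_ancestors] ancestors_unfold[of p u] 2 by auto
  next
    case 3
    then show ?thesis
      using ancestors_q_i ancestors_q_new ancestors_unfold[of p i] S_notin i_notin S_range by auto
  next
    case 4
    then have "p u = i" using S by (auto simp: children_def)
    then have "ancestors p u = insert u (insert i (ancestors p (p i)))"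
      using ancestors_unfold[of p u] ancestors_unfold[of p i] by simp
    moreover have "ancestors q u = insert u (insert N (ancestors p (p i)))"
      using ancestors_q_adopted[OF 4] ancestors_q_new by simp
    ultimately show ?thesis using 4 i i_notin S_notin S_range by auto
  qed
qed

lemma insert_above_cayley: "q \<in> cayley_trees N"
  unfolding cayley_trees_def
proof (intro CollectI conjI ballI allI impI)
  fix v assume "v \<notin> {2..N}"
  then show "q v = 0" using i S_range parent_outside[of v] by (auto simp: insert_above_def)
next
  fix v assume "v \<in> {2..N}"
  then show "q v \<in> {1..N}" using parent_i parent_in_range[of v] by (auto simp: insert_above_def)
next
  fix v assume v: "v \<in> {1..N}"
  have "1 \<in> ancestors q v"
  proof (cases "v = N")
    case True
    then show ?thesis using ancestors_q_new root_in_ancestors[OF parent_i] by auto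
  next
    case False
    then have "v \<in> {1..m}" using v by auto
    then show ?thesis using ancestors_insert_above[of v] root_in_ancestors[of v] i by auto
  qed
  then show "\<exists>k. (q ^^ k) v = 1" by (simp add: ex_funpow_iff_ancestors)
qed

sublocale new: cayley_tree N q
  by unfold_locales (rule insert_above_cayley)

lemma desc_insert_above_other:
  assumes w: "w \<in> {1..m}" "w \<noteq> i"
  shows "desc N q w = desc m p w \<union> (if w \<in> ancestors q N then {N} else {})"
proof -
  have "w \<in> ancestors q u \<longleftrightarrow> w \<in> ancestors p u" if "u \<in> {1..m}" for u
    using ancestors_insert_above[OF that] w by auto
  then show ?thesis unfolding desc_eq_ancestors by (auto simp: le_Suc_eq)
qed

lemma desc_insert_above_new: "desc N q N = insert N (desc m p i)"
proof -
  have "N \<in> ancestors q u \<longleftrightarrow> i \<in> ancestors p u" if "u \<in> {1..m}" for u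
    using ancestors_insert_above[OF that] ancestors_le[of u] that i by auto
  then show ?thesis unfolding desc_eq_ancestors using self_in_ancestors[of N q] by (auto simp: le_Suc_eq)
qed

lemma desc_insert_above_i: "desc N q i = desc m p i - (\<Union>c\<in>S. desc m p c)"
proof -
  have "i \<in> ancestors q u \<longleftrightarrow> i \<in> ancestors p u \<and> u \<notin> (\<Union>c\<in>S. desc m p c)"
    if "u \<in> {1..m}" for u
    using ancestors_insert_above[OF that] that i by (auto simp: desc_eq_ancestors)
  moreover have "i \<notin> ancestors q N"
    using ancestors_q_new not_in_ancestors_parent[of i] i by auto
  ultimately show ?thesis unfolding desc_eq_ancestors by (auto simp: le_Suc_eq)
qed

lemma beta_insert_above_other:
  assumes "w \<in> {1..m}" "w \<noteq> i"
  shows "beta N q w = beta m p w"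
proof -
  have "\<forall>d\<in>desc m p w. d < N" using desc_subset[of w] by auto
  then show ?thesis
    unfolding beta_def desc_insert_above_other[OF assms]
    using Min_insert_greater[OF finite_desc] self_in_desc[OF assms(1)] by auto
qed

lemma beta_insert_above_new: "beta N q N = beta m p i"
proof -
  have "\<forall>d\<in>desc m p i. d < N" using desc_subset[of i] by auto
  then show ?thesis
    unfolding beta_def desc_insert_above_new
    using Min_insert_greater[OF finite_desc] self_in_desc[of i] i by auto
qed

lemma beta_insert_above_adopted: "c \<in> S \<Longrightarrow> beta N q c = beta m p c"
  using S_range by (intro beta_insert_above_other) auto

lemma beta_insert_above_i_greater:
  assumes "b < i" and greater: "\<And>c. c \<in> children m p i - S \<Longrightarrow> b < beta m p c"
  shows "b < beta N q i"
proof -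
  let ?u = "beta N q i"
  have "?u \<in> desc m p i - (\<Union>c\<in>S. desc m p c)"
    using new.beta_in_desc[of i] i desc_insert_above_i by auto
  then show ?thesis
  proof (cases "?u = i")
    case False
    assume u: "?u \<in> desc m p i - (\<Union>c\<in>S. desc m p c)"
    then obtain c where c: "c \<in> {2..m}" "p c = i" "?u \<in> desc m p c"
      using desc_through_child[of i ?u] i False by auto
    then have "c \<in> children m p i - S" using u by (auto simp: children_def)
    then have "b < beta m p c" by (rule greater)
    also have "\<dots> \<le> ?u" using c(3) by (rule beta_le)
    finally show ?thesis .
  qed (use assms in simp)
qed

lemma children_insert_above_new: "children N q N = insert i S"
proof -
  have "c = i \<or> c \<in> S" if c: "c \<in> {2..N}" "q c = N" for c
  proof (rule ccontr)
    assume other: "\<not> (c = i \<or> c \<in> S)"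
    show False
    proof (cases "c = N")
      case True
      then show False using c parent_i by simp
    next
      case False
      then have "q c = p c" "c \<le> m" using other c by (auto simp: q_other)
      then show False using c parent_le[of c] by simp
    qed
  qed
  then show ?thesis using i S_range q_adopted by (auto simp: children_def)
qed

end

context subdivision
begin

lemma improper_children_insert_above:
  assumes S_improper: "\<forall>c\<in>S. beta m p c < i"
  shows "improper_children N q
    = insert i (improper_children m p) \<union> (if i \<in> improper_children m p then {N} else {})"
proof (rule set_eqI)
  fix j
  consider "j = N" | "j = i" | "j \<in> S" | "j \<noteq> N" "j \<noteq> i" "j \<notin> S" by blast
  then show "j \<in> improper_children N q
    \<longleftrightarrow> j \<in> insert i (improper_children m p) \<union> (if i \<in> improper_children m p then {N} else {})"
  proof cases
    case 1
    then show ?thesis using beta_insert_above_new i by (auto simp: improper_children_def)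
  next
    case 2
    then show ?thesis using new.beta_le_self[of i] i by (auto simp: improper_children_def)
  next
    case 3
    then have "beta m p j < i" "p j = i" "j \<in> {2..m}"
      using S_improper S by (auto simp: children_def)
    moreover have "beta N q j = beta m p j" "q j = N"
      using 3 beta_insert_above_adopted q_adopted by auto
    ultimately have "j \<in> improper_children m p" "j \<in> improper_children N q"
      using i by (auto simp: improper_children_def)
    then show ?thesis by simp
  next
    case 4
    then show ?thesis using beta_insert_above_other[of j]
      by (cases "j \<in> {2..m}") (auto simp: improper_children_def q_other)
  qed
qed

lemma impe_insert_above: "\<forall>c\<in>S. beta m p c < i \<Longrightarrow> impe N q = impe m p + 1"
  unfolding impe_eq_card improper_children_insert_above
  by (auto simp: improper_children_def card_insert_if)

lemma children_insert_above_i: "children N q i = children m p i - S"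
  using i S_range parent_neq_self[of i] unfolding children_def insert_above_def by auto

lemma children_insert_above_other:
  assumes "v \<in> {1..m}" "v \<noteq> i"
  shows "children N q v = children m p v - {i} \<union> (if v = p i then {N} else {})"
  using assms i S S_range unfolding children_def insert_above_def by auto

lemma beta_children_insert_above_other:
  assumes "v \<in> {1..m}" "v \<noteq> i"
  shows "beta N q ` children N q v = beta m p ` children m p v"
proof -
  have "beta N q j = beta m p j" if "j \<in> children m p v - {i}" for j
    using that by (intro beta_insert_above_other) (auto simp: children_def)
  moreover have "i \<in> children m p v \<longleftrightarrow> v = p i" using i by (auto simp: children_def)
  ultimately show ?thesis
    unfolding children_insert_above_other[OF assms] using beta_insert_above_new
    by (auto simp: image_iff) (metis DiffI singletonD)+
qed

lemma improper_parents_insert_above: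
  defines "keeps \<equiv> \<exists>j\<in>children m p i - S. beta m p j < i"
  shows "improper_parents N q
    = insert N (if keeps then improper_parents m p else improper_parents m p - {i})"
proof (rule set_eqI)
  fix v
  consider "v = N" | "v = i" | "v \<in> {1..m}" "v \<noteq> i" | "v \<notin> {1..N}" by force
  then show "v \<in> improper_parents N q
    \<longleftrightarrow> v \<in> insert N (if keeps then improper_parents m p else improper_parents m p - {i})"
  proof cases
    case 1
    have "i \<in> children N q N" "beta N q i < N"
      using children_insert_above_new new.beta_le_self[of i] i by auto
    then show ?thesis using 1 by (auto simp: improper_parents_iff)
  next
    case 2
    have "beta N q j = beta m p j" if "j \<in> children m p i - S" for j
      using that parent_neq_self[of i] i
      by (intro beta_insert_above_other) (auto simp: children_def)
    then have "beta N q ` children N q i = beta m p ` (children m p i - S)"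
      unfolding children_insert_above_i by simp
    then have "v \<in> improper_parents N q \<longleftrightarrow> keeps"
      using 2 i by (auto simp: improper_parents_iff keeps_def)
    moreover have "keeps \<Longrightarrow> i \<in> improper_parents m p"
      using i by (auto simp: improper_parents_iff keeps_def)
    ultimately show ?thesis using 2 i by auto
  next
    case 3
    then show ?thesis
      using beta_children_insert_above_other[OF 3] by (simp add: improper_parents_iff)
  next
    case 4
    then show ?thesis by (auto simp: improper_parents_iff)
  qed
qed

lemma impp_insert_above:
  "impp N q = card (if \<exists>j\<in>children m p i - S. beta m p j < i
     then improper_parents m p else improper_parents m p - {i}) + 1"
  unfolding impp_eq_card improper_parents_insert_above
  by (simp add: finite_improper_parents improper_parents_def)

lemma root_deg_insert_above: "root_deg N q = root_deg m p"
proof (cases "p i = 1")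
  case True
  then have "root_children N q = insert N (root_children m p - {i})"
    using i S S_range unfolding root_children_def children_def insert_above_def by auto
  moreover have "i \<in> root_children m p" "N \<notin> root_children m p"
    using True i by (auto simp: root_children_def)
  ultimately show ?thesis
    using finite_root_children[of m p] card_Suc_Diff1 by (simp add: root_deg_eq_card del: card_Diff_insert card_Diff_singleton)
next
  case False
  then have "root_children N q = root_children m p"
    using i S S_range unfolding root_children_def children_def insert_above_def by auto
  then show ?thesis by (simp add: root_deg_eq_card)
qed

end

section \<open>Removing the vertex m+1\<close>

lemma arg_max_on_in:
  fixes f :: "'a \<Rightarrow> 'b::linorder"
  assumes "finite A" "A \<noteq> {}"
  shows "arg_max_on f A \<in> A \<and> (\<forall>b\<in>A. f b \<le> f (arg_max_on f A))"
proof -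
  have "Max (f ` A) \<in> f ` A" using assms by (intro Max_in) auto
  then obtain a where "a \<in> A" "f a = Max (f ` A)" by (metis imageE)
  then have "a \<in> A" "\<And>b. b \<in> A \<Longrightarrow> \<not> f a < f b" using assms by auto
  then show ?thesis
    unfolding arg_max_on_def by (rule arg_maxI) (auto simp: not_less)
qed

lemma arg_max_on_eq:
  fixes f :: "'a \<Rightarrow> 'b::linorder"
  assumes "a \<in> A" and greatest: "\<forall>b\<in>A. b \<noteq> a \<longrightarrow> f b < f a"
  shows "arg_max_on f A = a"
  unfolding arg_max_on_def
proof (rule arg_maxI[of "\<lambda>x. x \<in> A" a])
  show "\<not> f a < f b" if "b \<in> A" for b
    using that greatest by (cases "b = a") auto
  show "b = a" if "b \<in> A" "\<forall>c. c \<in> A \<longrightarrow> \<not> f b < f c" for b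
    using that greatest \<open>a \<in> A\<close> by blast
qed (rule \<open>a \<in> A\<close>)

(* Where the new vertex N = m+1 goes: [Leaf v] hangs N below v, [Above c] puts N between
   c and its parent, and [Gather j], for an improper edge (p j, j), puts N between p j and
   its parent and moves to N the children of p j whose beta is at most beta j. *)
datatype position = Leaf nat | Above nat | Gather nat

definition gathered :: "nat \<Rightarrow> (nat \<Rightarrow> nat) \<Rightarrow> nat \<Rightarrow> nat set" where
  "gathered m p j = {c \<in> children m p (p j). beta m p c \<le> beta m p j}"

fun insert_at :: "nat \<Rightarrow> (nat \<Rightarrow> nat) \<Rightarrow> position \<Rightarrow> nat \<Rightarrow> nat" where
  "insert_at m p (Leaf v) = p(Suc m := v)"
| "insert_at m p (Above c) = insert_above m p c {}"
| "insert_at m p (Gather j) = insert_above m p (p j) (gathered m p j)"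

definition positions :: "nat \<Rightarrow> (nat \<Rightarrow> nat) \<Rightarrow> position set" where
  "positions m p = Leaf ` {1..m} \<union> Above ` {2..m} \<union> Gather ` improper_children m p"

definition heir :: "nat \<Rightarrow> (nat \<Rightarrow> nat) \<Rightarrow> nat" where
  "heir m q = arg_max_on (beta (Suc m) q) (children (Suc m) q (Suc m))"

definition remove_max :: "nat \<Rightarrow> (nat \<Rightarrow> nat) \<Rightarrow> nat \<Rightarrow> nat" where
  "remove_max m q =
     (if children (Suc m) q (Suc m) = {} then q(Suc m := 0)
      else (\<lambda>v. if v = Suc m then 0 else if v = heir m q then q (Suc m)
                else if q v = Suc m then heir m q else q v))"

definition removal_position :: "nat \<Rightarrow> (nat \<Rightarrow> nat) \<Rightarrow> position" where
  "removal_position m q =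
     (let C = children (Suc m) q (Suc m) in
      if C = {} then Leaf (q (Suc m))
      else if C = {heir m q} then Above (heir m q)
      else Gather (arg_max_on (beta (Suc m) q) (C - {heir m q})))"

locale vertex_removal =
  fixes m :: nat and q :: "nat \<Rightarrow> nat"
  assumes cayley_Suc: "q \<in> cayley_trees (Suc m)" and m: "1 \<le> m"
begin

abbreviation "N \<equiv> Suc m"

sublocale old: cayley_tree N q
  by unfold_locales (rule cayley_Suc)

lemma parent_N: "q N \<in> {1..m}"
  using old.parent_in_range[of N] old.parent_neq_self[of N] m by auto

lemma children_N_subset: "children N q N \<subseteq> {2..m}"
  using parent_N by (auto simp: children_def le_Suc_eq)

lemma parent_le_unless_child_N: "u \<le> m \<Longrightarrow> u \<notin> children N q N \<Longrightarrow> q u \<le> m"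
  using old.parent_le[of u] old.parent_outside[of u]
  by (cases "u \<in> {2..m}") (auto simp: children_def le_Suc_eq)

end

locale leaf_removal = vertex_removal +
  assumes leaf: "children N q N = {}"
begin

abbreviation "p \<equiv> q(N := 0)"

lemma remove_max_leaf: "remove_max m q = p"
  by (simp add: remove_max_def leaf)

lemma removal_position_leaf: "removal_position m q = Leaf (q N)"
  by (simp add: removal_position_def leaf)

lemma remove_leaf_cayley: "p \<in> cayley_trees m"
  unfolding cayley_trees_def
proof (intro CollectI conjI ballI allI impI)
  fix v assume "v \<notin> {2..m}"
  then show "p v = 0" using old.parent_outside[of v] by auto
next
  fix v assume "v \<in> {2..m}"
  then show "p v \<in> {1..m}" using old.parent_in_range[of v] parent_le_unless_child_N[of v] leaf by auto
next
  fix v assume v: "v \<in> {1..m}"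
  have "ancestors p v = ancestors q v"
  proof (rule ancestors_cong)
    fix w assume "w \<in> ancestors q v"
    then obtain k where "w = (q ^^ k) v" by (auto simp: ancestors_def)
    moreover have "(q ^^ k) v \<le> m"
      using v leaf parent_le_unless_child_N by (induction k) auto
    ultimately show "p w = q w" by simp
  qed
  then show "\<exists>k. (p ^^ k) v = 1" using old.root_in_ancestors[of v] v by (simp add: ex_funpow_iff_ancestors)
qed

end

locale inner_removal = vertex_removal +
  assumes inner: "children N q N \<noteq> {}"
begin

abbreviation "i \<equiv> heir m q"
abbreviation "S \<equiv> children N q N - {i}"
abbreviation "p \<equiv> remove_max m q"

lemma heir_child: "i \<in> children N q N"
  and heir_greatest: "\<forall>b\<in>children N q N. beta N q b \<le> beta N q i"
  using arg_max_on_in[OF finite_subset[OF children_N_subset] inner] by (auto simp: heir_def)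

lemma heir_range: "i \<in> {2..m}"
  using heir_child children_N_subset by auto

lemma q_heir: "q i = N"
  using heir_child by (simp add: children_def)

lemma q_S: "c \<in> S \<Longrightarrow> q c = N"
  by (auto simp: children_def)

lemma beta_S_less: "c \<in> S \<Longrightarrow> beta N q c < beta N q i"
  using heir_greatest old.beta_siblings_neq[of c i] heir_child
  by (force simp: children_def)

lemma remove_max_inner:
  "p = (\<lambda>v. if v = N then 0 else if v = i then q N else if v \<in> S then i else q v)"
  unfolding remove_max_def if_not_P[OF inner]
  using old.parent_outside by (intro ext) (auto simp: children_def)

lemma p_N [simp]: "p N = 0"
  by (simp add: remove_max_inner)

lemma p_heir [simp]: "p i = q N"
  using heir_range by (simp add: remove_max_inner)

lemma p_S: "c \<in> S \<Longrightarrow> p c = i"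
  using children_N_subset by (auto simp: remove_max_inner)

lemma p_other: "v \<noteq> N \<Longrightarrow> v \<noteq> i \<Longrightarrow> v \<notin> S \<Longrightarrow> p v = q v"
  by (simp add: remove_max_inner)

lemma root_in_ancestors_removal: "v \<in> {1..m} \<Longrightarrow> 1 \<in> ancestors p v"
proof -
  assume "v \<in> {1..m}"
  then have "v \<in> {1..N}" "v \<noteq> N" by auto
  then show ?thesis
  proof (induction v rule: old.ancestors_induct)
    case (step u)
    have IH_N: "1 \<in> ancestors p (q N)" if "q u = N"
    proof -
      have "q N \<in> ancestors q (q u)"
        using that self_in_ancestors[of "q N" q] ancestors_unfold[of q N] by simp
      then show ?thesis using step.IH[of "q N"] parent_N by auto
    qed
    consider "u = 1" | "u = i" | "u \<in> S" | "u \<in> {2..m}" "u \<noteq> i" "u \<notin> S"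
      using step.hyps step.prems by force
    then show ?case
    proof cases
      case 1
      then show ?thesis by (simp add: self_in_ancestors)
    next
      case 2
      then show ?thesis
        using IH_N q_heir ancestors_unfold[of p i] by auto
    next
      case 3
      then show ?thesis
        using IH_N q_S p_S ancestors_unfold[of p u] ancestors_unfold[of p i] by auto
    next
      case 4
      then have "q u \<le> m" "q u \<in> {1..N}" "p u = q u"
        using parent_le_unless_child_N[of u] old.parent_in_range[of u] p_other[of u] by auto
      then show ?thesis
        using step.IH[OF self_in_ancestors] ancestors_unfold[of p u] by auto
    qed
  qed
qed

lemma remove_inner_cayley: "p \<in> cayley_trees m"
  unfolding cayley_trees_def
proof (intro CollectI conjI ballI allI impI)
  fix v assume "v \<notin> {2..m}"
  then show "p v = 0"
    using old.parent_outside[of v] heir_range children_N_subset by (auto simp: remove_max_inner)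
next
  fix v assume v: "v \<in> {2..m}"
  show "p v \<in> {1..m}"
  proof (cases "v = i \<or> v \<in> S")
    case True
    then show ?thesis using parent_N heir_range p_S by auto
  next
    case False
    then show ?thesis
      using v old.parent_in_range[of v] parent_le_unless_child_N[of v] p_other[of v] by auto
  qed
next
  fix v assume "v \<in> {1..m}"
  then show "\<exists>k. (p ^^ k) v = 1"
    using root_in_ancestors_removal by (simp add: ex_funpow_iff_ancestors)
qed

sublocale sub: subdivision m p i S
  using remove_inner_cayley heir_range p_S children_N_subset
  by unfold_locales (auto simp: children_def)

lemma insert_above_remove_max: "insert_above m p i S = q"
proof
  fix v
  consider "v = N" | "v = i" | "v \<in> S" | "v \<noteq> N" "v \<noteq> i" "v \<notin> S" by blast
  then show "insert_above m p i S v = q v"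
    using heir_range by cases (auto simp: insert_above_def q_heir q_S p_other)
qed

lemma beta_S_remove_max: "c \<in> S \<Longrightarrow> beta m p c = beta N q c"
  using sub.beta_insert_above_adopted insert_above_remove_max by simp

lemma S_improper: "c \<in> S \<Longrightarrow> beta m p c < i"
proof -
  assume c: "c \<in> S"
  have "beta m p c = beta N q c" by (rule beta_S_remove_max[OF c])
  also have "\<dots> < beta N q i" by (rule beta_S_less[OF c])
  also have "\<dots> \<le> i" using old.beta_le_self[of i] heir_range by auto
  finally show ?thesis .
qed

end

context leaf_removal
begin

lemma removal_position_in_positions: "removal_position m q \<in> positions m p"
  using parent_N by (simp add: removal_position_leaf positions_def)

lemma insert_at_removal_position: "insert_at m p (removal_position m q) = q"
  by (simp add: removal_position_leaf)

end

context inner_removal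
begin

abbreviation "j \<equiv> arg_max_on (beta N q) S"

lemma removal_position_inner:
  "removal_position m q = (if S = {} then Above i else Gather j)"
  using inner heir_child by (auto simp: removal_position_def Let_def)

lemma gathered_remove_max:
  assumes "S \<noteq> {}"
  shows "j \<in> S" "p j = i" "gathered m p j = S"
proof -
  have j: "j \<in> S" and j_greatest: "\<forall>b\<in>S. beta N q b \<le> beta N q j"
    using arg_max_on_in[of S "beta N q"] assms finite_subset[OF _ finite_atLeastAtMost]
      children_N_subset by auto
  show "j \<in> S" by (rule j)
  show pj: "p j = i" using p_S[OF j] .
  show "gathered m p j = S"
  proof (rule set_eqI)
    fix c
    show "c \<in> gathered m p j \<longleftrightarrow> c \<in> S"
    proof
      assume c: "c \<in> S"
      then show "c \<in> gathered m p j"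
        using j_greatest p_S[OF c] pj beta_S_remove_max[OF c] beta_S_remove_max[OF j] children_N_subset
        by (auto simp: gathered_def children_def)
    next
      assume "c \<in> gathered m p j"
      then have c: "c \<in> {2..m}" "p c = i" "beta m p c \<le> beta m p j"
        using pj by (auto simp: gathered_def children_def)
      show "c \<in> S"
      proof (rule ccontr)
        assume "c \<notin> S"
        have "c \<noteq> i" using c sub.parent_neq_self[of i] heir_range by auto
        then have "q c = i" using p_other[of c] \<open>c \<notin> S\<close> c by auto
        then have "beta N q i \<le> beta N q c" using old.beta_parent_le[of c] c by auto
        also have "beta N q c = beta m p c"
          using sub.beta_insert_above_other[of c] c \<open>c \<noteq> i\<close> insert_above_remove_max by auto
        also have "\<dots> \<le> beta N q j" using c(3) beta_S_remove_max[OF j] by simp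
        finally show False using beta_S_less[OF j] by simp
      qed
    qed
  qed
qed

lemma removal_position_in_positions: "removal_position m q \<in> positions m p"
proof (cases "S = {}")
  case True
  then have "removal_position m q = Above i" by (simp add: removal_position_inner)
  then show ?thesis using heir_range by (simp add: positions_def)
next
  case False
  then have "removal_position m q = Gather j" by (simp add: removal_position_inner)
  moreover have "j \<in> S" "p j = i" using gathered_remove_max[OF False] by auto
  then have "j \<in> improper_children m p"
    using S_improper children_N_subset by (auto simp: improper_children_def)
  ultimately show ?thesis by (simp add: positions_def)
qed

lemma insert_at_removal_position: "insert_at m p (removal_position m q) = q"
proof (cases "S = {}")
  case True
  then have "removal_position m q = Above i" by (simp add: removal_position_inner)
  then show ?thesis using insert_above_remove_max[unfolded True] by simp
next
  case False
  then show ?thesis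
    using insert_above_remove_max gathered_remove_max[OF False] by (simp add: removal_position_inner)
qed

end

context vertex_removal
begin

lemma removal_inverse:
  "remove_max m q \<in> cayley_trees m
   \<and> removal_position m q \<in> positions m (remove_max m q)
   \<and> insert_at m (remove_max m q) (removal_position m q) = q"
proof (cases "children N q N = {}")
  case True
  interpret leaf_removal m q by unfold_locales (rule True)
  show ?thesis
    using remove_leaf_cayley removal_position_in_positions insert_at_removal_position
    by (simp add: remove_max_leaf)
next
  case False
  interpret inner_removal m q by unfold_locales (rule False)
  show ?thesis
    using remove_inner_cayley removal_position_in_positions insert_at_removal_position by simp
qed

end

context leaf_insertion
begin

lemma insert_leaf_inverse: "remove_max m q = p \<and> removal_position m q = Leaf v"
proof -
  have "p c \<noteq> N" for c
    using parent_le[of c] parent_outside[of c] by (cases "c \<le> m") auto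
  then have leaf: "children N q N = {}"
    using v by (auto simp: children_def)
  have "remove_max m q = q(N := 0)" by (unfold remove_max_def leaf) simp
  also have "\<dots> = p" using parent_outside[of N] by (intro ext) simp
  moreover have "removal_position m q = Leaf v" by (unfold removal_position_def Let_def leaf) simp
  ultimately show ?thesis by simp
qed

end

context subdivision
begin

lemma heir_insert_above:
  assumes "\<forall>c\<in>S. beta N q c < beta N q i"
  shows "heir m q = i"
  unfolding heir_def children_insert_above_new
  by (rule arg_max_on_eq) (use assms in auto)

lemma remove_max_insert_above:
  assumes "heir m q = i"
  shows "remove_max m q = p"
proof
  fix v
  have unfold: "remove_max m q v
      = (if v = N then 0 else if v = i then q N else if q v = N then i else q v)"
    using children_insert_above_new assms by (simp add: remove_max_def)
  consider "v = N" | "v = i" | "v \<in> S" | "v \<noteq> N" "v \<noteq> i" "v \<notin> S" by blast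
  then show "remove_max m q v = p v"
  proof cases
    case 1
    then show ?thesis using unfold parent_outside[of N] by simp
  next
    case 2
    then show ?thesis using unfold i by simp
  next
    case 3
    then show ?thesis using unfold q_adopted[OF 3] S S_range by (auto simp: children_def)
  next
    case 4
    have "p v \<noteq> N" using parent_le[of v] parent_outside[of v] by (cases "v \<le> m") auto
    then show ?thesis using unfold 4 q_other[OF 4] by simp
  qed
qed

lemma removal_position_insert_above:
  assumes "heir m q = i"
  shows "removal_position m q = (if S = {} then Above i else Gather (arg_max_on (beta N q) S))"
proof -
  have "insert i S \<noteq> {}" "insert i S = {i} \<longleftrightarrow> S = {}" "insert i S - {i} = S"
    using S_range by auto
  then show ?thesis
    unfolding removal_position_def Let_def children_insert_above_new assms by simp
qed

lemma insert_above_empty_inverse: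
  assumes "S = {}"
  shows "remove_max m q = p \<and> removal_position m q = Above i"
proof -
  have "heir m q = i" by (rule heir_insert_above) (simp add: assms)
  then show ?thesis using remove_max_insert_above removal_position_insert_above assms by simp
qed

lemma insert_above_gathered_inverse:
  assumes j: "j \<in> improper_children m p" and i_eq: "i = p j" and S_eq: "S = gathered m p j"
  shows "remove_max m q = p \<and> removal_position m q = Gather j"
proof -
  have j_range: "j \<in> {2..m}" "beta m p j < i" using j i_eq by (auto simp: improper_children_def)
  have j_S: "j \<in> S" using j_range i_eq S_eq by (auto simp: gathered_def children_def)
  have "beta m p j < beta N q i"
    by (rule beta_insert_above_i_greater) (use j_range i_eq S_eq in \<open>auto simp: gathered_def\<close>)
  moreover have "beta N q c \<le> beta m p j" if "c \<in> S" for c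
    using that beta_insert_above_adopted[OF that] S_eq by (simp add: gathered_def)
  ultimately have heir: "heir m q = i"
    by (intro heir_insert_above) (auto intro: le_less_trans)
  have "arg_max_on (beta N q) S = j"
  proof (rule arg_max_on_eq[OF j_S], intro ballI impI)
    fix b assume b: "b \<in> S" "b \<noteq> j"
    then have "beta m p b \<le> beta m p j" "beta m p b \<noteq> beta m p j"
      using beta_siblings_neq[of b j] j_range S_eq by (auto simp: gathered_def children_def)
    then show "beta N q b < beta N q j"
      using beta_insert_above_adopted[OF b(1)] beta_insert_above_adopted[OF j_S] by simp
  qed
  moreover have "S \<noteq> {}" using j_S by blast
  ultimately show ?thesis
    using remove_max_insert_above[OF heir] removal_position_insert_above[OF heir] by simp
qed

end

context cayley_tree
begin

lemma gathered_subdivision: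
  assumes j: "j \<in> improper_children m p"
  shows "subdivision m p (p j) (gathered m p j)"
proof -
  have "p j \<in> {2..m}"
    using j parent_in_range[of j] beta_in_range[of j] by (auto simp: improper_children_def)
  then show ?thesis by unfold_locales (auto simp: gathered_def)
qed

lemma insert_at_inverse:
  assumes "pos \<in> positions m p"
  shows "insert_at m p pos \<in> cayley_trees (Suc m)
    \<and> remove_max m (insert_at m p pos) = p \<and> removal_position m (insert_at m p pos) = pos"
proof -
  consider (Leaf) v where "pos = Leaf v" "v \<in> {1..m}"
    | (Above) c where "pos = Above c" "c \<in> {2..m}"
    | (Gather) j where "pos = Gather j" "j \<in> improper_children m p"
    using assms by (auto simp: positions_def)
  then show ?thesis
  proof cases
    case Leaf
    have "leaf_insertion m p v" by unfold_locales (rule Leaf(2))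
    then show ?thesis using leaf_insertion.leaf_cayley leaf_insertion.insert_leaf_inverse Leaf by simp
  next
    case Above
    have "subdivision m p c {}" by unfold_locales (use Above in auto)
    then show ?thesis
      using subdivision.insert_above_cayley subdivision.insert_above_empty_inverse Above by simp
  next
    case Gather
    with gathered_subdivision[OF Gather(2)] show ?thesis
      using subdivision.insert_above_cayley subdivision.insert_above_gathered_inverse by simp
  qed
qed

end

lemma bij_betw_insert_at:
  assumes "1 \<le> m"
  shows "bij_betw (\<lambda>(p, pos). insert_at m p pos)
    (SIGMA p:cayley_trees m. positions m p) (cayley_trees (Suc m))"
proof -
  have removal: "vertex_removal m q" if "q \<in> cayley_trees (Suc m)" for q
    using that assms by unfold_locales
  have insertion: "cayley_tree m p" if "p \<in> cayley_trees m" for p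
    using that by unfold_locales
  show ?thesis
  proof (rule bij_betw_byWitness[where f'="\<lambda>q. (remove_max m q, removal_position m q)"])
    show "(\<lambda>(p, pos). insert_at m p pos) ` (SIGMA p:cayley_trees m. positions m p)
        \<subseteq> cayley_trees (Suc m)"
      using cayley_tree.insert_at_inverse insertion by auto
    show "(\<lambda>q. (remove_max m q, removal_position m q)) ` cayley_trees (Suc m)
        \<subseteq> (SIGMA p:cayley_trees m. positions m p)"
      using vertex_removal.removal_inverse removal by auto
    show "\<forall>a\<in>(SIGMA p:cayley_trees m. positions m p).
        (\<lambda>q. (remove_max m q, removal_position m q)) ((\<lambda>(p, pos). insert_at m p pos) a) = a"
      using cayley_tree.insert_at_inverse insertion by auto
    show "\<forall>q\<in>cayley_trees (Suc m).
        (\<lambda>(p, pos). insert_at m p pos) (remove_max m q, removal_position m q) = q"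
      using vertex_removal.removal_inverse removal by auto
  qed
qed

section \<open>Weights and the recurrence\<close>

lemma pderiv_sum: "pderiv (sum f A) = (\<Sum>a\<in>A. pderiv (f a))"
  using higher_pderiv_sum[of 1 f A] by simp

lemma pderiv_power_linear:
  fixes A :: "'a::{comm_ring_1, semiring_no_zero_divisors} poly"
  assumes "pderiv A = 1"
  shows "A * pderiv (A ^ n) = smult (of_nat n) (A ^ n)"
proof (cases n)
  case (Suc k)
  have "A * pderiv (A ^ Suc k) = A * (smult (of_nat (Suc k)) (A ^ k) * 1)"
    by (simp only: pderiv_power_Suc assms)
  also have "\<dots> = smult (of_nat (Suc k)) (A ^ Suc k)"
    by (simp only: mult_1_right mult_smult_right power_Suc)
  finally show ?thesis using Suc by simp
qed simp

lemma pderiv_powers_linear: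
  fixes A B :: "'a::{comm_ring_1, semiring_no_zero_divisors} poly"
  assumes "pderiv A = 1" "pderiv B = 1"
  shows "B * A * pderiv (smult k (A ^ a * B ^ b))
    = smult (of_nat a) (B * smult k (A ^ a * B ^ b)) + smult (of_nat b) (A * smult k (A ^ a * B ^ b))"
proof -
  have "B * A * pderiv (smult k (A ^ a * B ^ b))
      = smult k (A ^ a * A * (B * pderiv (B ^ b)) + B ^ b * B * (A * pderiv (A ^ a)))"
    by (simp add: pderiv_smult pderiv_mult algebra_simps)
  also have "\<dots> = smult k (A ^ a * A * smult (of_nat b) (B ^ b) + B ^ b * B * smult (of_nat a) (A ^ a))"
    using pderiv_power_linear[of A a] pderiv_power_linear[of B b] assms by simp
  finally show ?thesis by (simp add: algebra_simps smult_add_right)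
qed

definition tree_weight :: "real \<Rightarrow> real \<Rightarrow> real \<Rightarrow> nat \<Rightarrow> (nat \<Rightarrow> nat) \<Rightarrow> real poly" where
  "tree_weight x z t m p =
     smult (x ^ (root_deg m p - 1) * z ^ (lead m p - root_deg m p - 1))
       ([:1, 1:] ^ (impe m p - impp m p) * [:t, 1:] ^ impp m p)"

definition largest_improper :: "nat \<Rightarrow> (nat \<Rightarrow> nat) \<Rightarrow> nat \<Rightarrow> bool" where
  "largest_improper m p j \<longleftrightarrow>
     (\<forall>c\<in>children m p (p j). beta m p c < p j \<longrightarrow> beta m p c \<le> beta m p j)"

fun position_weight :: "real \<Rightarrow> real \<Rightarrow> real \<Rightarrow> nat \<Rightarrow> (nat \<Rightarrow> nat) \<Rightarrow> position \<Rightarrow> real poly" where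
  "position_weight x z t m p (Leaf v) = (if v = 1 then [:x:] else [:z:])"
| "position_weight x z t m p (Above c) = [:t, 1:]"
| "position_weight x z t m p (Gather j) = (if largest_improper m p j then [:1, 1:] else [:t, 1:])"

lemma tree_weight_Suc:
  assumes p: "cayley_tree m p" and m: "2 \<le> m"
    and deg: "root_deg (Suc m) q = root_deg m p + d"
    and impe: "impe (Suc m) q = impe m p + e"
    and impp: "impp (Suc m) q = impp m p + f"
    and "d + e \<le> 1" "f \<le> e"
    and q: "cayley_tree (Suc m) q"
  shows "tree_weight x z t (Suc m) q
    = smult (x ^ d * z ^ (1 - d - e)) ([:1, 1:] ^ (e - f) * [:t, 1:] ^ f) * tree_weight x z t m p"
proof -
  have deg_pos: "1 \<le> root_deg m p" using cayley_tree.root_deg_pos[OF p m] .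
  have bound: "impe m p + root_deg m p + 1 \<le> m" using cayley_tree.impe_root_deg_bound[OF p] m by simp
  have le: "impp m p \<le> impe m p" using cayley_tree.impp_le_impe[OF p] .
  have x_exp: "root_deg (Suc m) q - 1 = d + (root_deg m p - 1)" using deg deg_pos by simp
  have z_exp: "lead (Suc m) q - root_deg (Suc m) q - 1 = (1 - d - e) + (lead m p - root_deg m p - 1)"
    using cayley_tree.lead_eq[OF q] cayley_tree.lead_eq[OF p] deg impe bound m assms(6) by simp
  have u_exp: "impe (Suc m) q - impp (Suc m) q = (e - f) + (impe m p - impp m p)"
    using impe impp le assms(7) by simp
  show ?thesis
    unfolding tree_weight_def x_exp z_exp u_exp unfolding impp
    by (simp add: power_add mult_ac)
qed

context leaf_insertion
begin

lemma tree_weight_leaf: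
  assumes m: "2 \<le> m"
  shows "tree_weight x z t N q = (if v = 1 then [:x:] else [:z:]) * tree_weight x z t m p"
proof -
  have "tree_weight x z t N q
    = smult (x ^ (if v = 1 then 1 else 0) * z ^ (1 - (if v = 1 then 1 else 0) - 0))
        ([:1, 1:] ^ (0 - 0) * [:t, 1:] ^ 0) * tree_weight x z t m p"
    by (rule tree_weight_Suc[OF cayley_tree_axioms m])
      (simp_all add: root_deg_leaf impe_eq_card impp_eq_card improper_children_leaf
        improper_parents_leaf new.cayley_tree_axioms)
  then show ?thesis by simp
qed

end

context subdivision
begin

lemma tree_weight_insert_above_empty:
  assumes m: "2 \<le> m" and "S = {}"
  shows "tree_weight x z t N q = [:t, 1:] * tree_weight x z t m p"
proof -
  have "i \<in> improper_parents m p \<longleftrightarrow> (\<exists>j\<in>children m p i. beta m p j < i)"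
    using i by (auto simp: improper_parents_iff)
  then have "impp N q = card (improper_parents m p) + 1"
    using impp_insert_above \<open>S = {}\<close> by (cases "i \<in> improper_parents m p") auto
  then have impp: "impp N q = impp m p + 1" by (simp add: impp_eq_card)
  have impe: "impe N q = impe m p + 1" using impe_insert_above \<open>S = {}\<close> by simp
  have "tree_weight x z t N q
    = smult (x ^ 0 * z ^ (1 - 0 - 1)) ([:1, 1:] ^ (1 - 1) * [:t, 1:] ^ 1) * tree_weight x z t m p"
    by (rule tree_weight_Suc[OF cayley_tree_axioms m])
      (simp_all add: root_deg_insert_above impe impp new.cayley_tree_axioms)
  then show ?thesis by simp
qed

lemma tree_weight_insert_above_gathered:
  assumes m: "2 \<le> m" and j: "j \<in> improper_children m p"
    and i_eq: "i = p j" and S_eq: "S = gathered m p j"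
  shows "tree_weight x z t N q
    = (if largest_improper m p j then [:1, 1:] else [:t, 1:]) * tree_weight x z t m p"
proof -
  have j_range: "j \<in> {2..m}" "beta m p j < i" using j i_eq by (auto simp: improper_children_def)
  have keeps: "(\<exists>c\<in>children m p i - S. beta m p c < i) \<longleftrightarrow> \<not> largest_improper m p j"
    using i_eq S_eq by (auto simp: largest_improper_def gathered_def)
  have "i \<in> improper_parents m p"
    using j_range i_eq parent_in_range[of j] by (auto simp: improper_parents_def)
  moreover have "card (improper_parents m p) > 0"
    using calculation finite_improper_parents[of m p] by (auto simp: card_gt_0_iff)
  ultimately have "impp N q = impp m p + (if largest_improper m p j then 0 else 1)"
    using impp_insert_above[unfolded keeps] finite_improper_parents[of m p]
    by (auto simp: impp_eq_card)
  moreover have "\<forall>c\<in>S. beta m p c < i" using j_range S_eq i_eq by (auto simp: gathered_def)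
  ultimately have "tree_weight x z t N q
    = smult (x ^ 0 * z ^ (1 - 0 - 1))
        ([:1, 1:] ^ (1 - (if largest_improper m p j then 0 else 1))
          * [:t, 1:] ^ (if largest_improper m p j then 0 else 1)) * tree_weight x z t m p"
    by (intro tree_weight_Suc[OF cayley_tree_axioms m])
      (simp_all add: root_deg_insert_above impe_insert_above new.cayley_tree_axioms)
  then show ?thesis by simp
qed

end

context cayley_tree
begin

lemma tree_weight_insert_at:
  assumes m: "2 \<le> m" and pos: "pos \<in> positions m p"
  shows "tree_weight x z t (Suc m) (insert_at m p pos)
    = position_weight x z t m p pos * tree_weight x z t m p"
proof -
  consider (Leaf) v where "pos = Leaf v" "v \<in> {1..m}"
    | (Above) c where "pos = Above c" "c \<in> {2..m}"
    | (Gather) j where "pos = Gather j" "j \<in> improper_children m p"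
    using pos by (auto simp: positions_def)
  then show ?thesis
  proof cases
    case Leaf
    then have "leaf_insertion m p v" by unfold_locales
    then show ?thesis using leaf_insertion.tree_weight_leaf[OF _ m] Leaf by simp
  next
    case Above
    then have "subdivision m p c {}" by unfold_locales auto
    then show ?thesis using subdivision.tree_weight_insert_above_empty[OF _ m] Above by simp
  next
    case Gather
    with gathered_subdivision[OF Gather(2)] show ?thesis
      using subdivision.tree_weight_insert_above_gathered[OF _ m] by simp
  qed
qed

lemma card_largest_improper: "card {j \<in> improper_children m p. largest_improper m p j} = impp m p"
proof -
  let ?L = "{j \<in> improper_children m p. largest_improper m p j}"
  have "inj_on p ?L"
  proof (rule inj_onI)
    fix j j' assume j: "j \<in> ?L" and j': "j' \<in> ?L" and same_parent: "p j = p j'"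
    have "beta m p j = beta m p j'"
      using j j' same_parent
      by (auto simp: improper_children_def largest_improper_def children_def intro: antisym)
    then show "j = j'"
      using beta_siblings_neq[of j j'] j j' same_parent by (auto simp: improper_children_def)
  qed
  moreover have "p ` ?L = improper_parents m p"
  proof
    show "p ` ?L \<subseteq> improper_parents m p"
      unfolding improper_parents_eq_image by auto
    show "improper_parents m p \<subseteq> p ` ?L"
    proof
      fix i assume "i \<in> improper_parents m p"
      then have ne: "{c \<in> children m p i. beta m p c < i} \<noteq> {}"
        by (auto simp: improper_parents_def children_def)
      let ?j = "arg_max_on (beta m p) {c \<in> children m p i. beta m p c < i}"
      have "?j \<in> {c \<in> children m p i. beta m p c < i}"
        and "\<forall>b\<in>{c \<in> children m p i. beta m p c < i}. beta m p b \<le> beta m p ?j"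
        using arg_max_on_in[OF _ ne] by (auto simp: children_def)
      then have "?j \<in> ?L" "p ?j = i"
        by (auto simp: improper_children_def largest_improper_def children_def)
      then show "i \<in> p ` ?L" by force
    qed
  qed
  ultimately show ?thesis
    by (metis card_image impp_eq_card)
qed

lemma card_not_largest_improper:
  "card {j \<in> improper_children m p. \<not> largest_improper m p j} = impe m p - impp m p"
proof -
  have "card (improper_children m p)
      = card {j \<in> improper_children m p. largest_improper m p j}
        + card {j \<in> improper_children m p. \<not> largest_improper m p j}"
    using finite_improper_children[of m p]
    by (subst card_Un_disjoint[symmetric]) (auto intro: arg_cong[where f=card])
  then show ?thesis using card_largest_improper by (simp add: impe_eq_card)
qed

lemma sum_position_weight:
  assumes m: "2 \<le> m"
  shows "(\<Sum>pos\<in>positions m p. position_weight x z t m p pos)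
    = [:x + of_nat (m - 1) * z:] + smult (of_nat (m - 1)) [:t, 1:]
      + smult (of_nat (impp m p)) [:1, 1:] + smult (of_nat (impe m p - impp m p)) [:t, 1:]"
proof -
  let ?w = "position_weight x z t m p"
  let ?I = "improper_children m p"
  have "sum ?w (positions m p) = sum ?w (Leaf ` {1..m}) + sum ?w (Above ` {2..m}) + sum ?w (Gather ` ?I)"
    unfolding positions_def using finite_improper_children[of m p]
    by (subst sum.union_disjoint; auto)+
  also have "sum ?w (Leaf ` {1..m}) = (\<Sum>v\<in>{1..m}. ?w (Leaf v))"
    by (simp add: sum.reindex inj_on_def)
  also have "\<dots> = [:x:] + (\<Sum>v\<in>{2..m}. [:z:])"
  proof -
    have "{1..m} = insert 1 {2..m}" using m by auto
    then show ?thesis by simp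
  qed
  also have "sum ?w (Above ` {2..m}) = (\<Sum>c\<in>{2..m}. [:t, 1:])"
    by (simp add: sum.reindex inj_on_def)
  also have "sum ?w (Gather ` ?I) = (\<Sum>j\<in>?I. if largest_improper m p j then [:1, 1:] else [:t, 1:])"
    by (simp add: sum.reindex inj_on_def)
  also have "\<dots> = (\<Sum>j\<in>{j \<in> ?I. largest_improper m p j}. [:1, 1:])
      + (\<Sum>j\<in>{j \<in> ?I. \<not> largest_improper m p j}. [:t, 1:])"
    using sum.If_cases[OF finite_improper_children, of "largest_improper m p" "\<lambda>_. [:1, 1:]" "\<lambda>_. [:t, 1:]"]
    by (simp add: Collect_conj_eq Int_commute Compl_eq)
  finally show ?thesis
    by (simp add: card_largest_improper card_not_largest_improper of_nat_poly
        smult_add_left[symmetric] algebra_simps)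
qed

end

context cayley_tree
begin

lemma sum_tree_weight_insert_at:
  assumes m: "2 \<le> m"
  shows "(\<Sum>pos\<in>positions m p. tree_weight x z t (Suc m) (insert_at m p pos))
    = [:x + of_nat (m - 1) * z + of_nat (m - 1) * t, of_nat (m - 1):] * tree_weight x z t m p
      + [:t, 1:] * [:1, 1:] * pderiv (tree_weight x z t m p)"
proof -
  define W where "W = tree_weight x z t m p"
  have "(\<Sum>pos\<in>positions m p. tree_weight x z t (Suc m) (insert_at m p pos))
      = (\<Sum>pos\<in>positions m p. position_weight x z t m p pos) * W"
    using tree_weight_insert_at[OF m] by (simp add: sum_distrib_right W_def)
  also have "\<dots> = ([:x + of_nat (m - 1) * z:] + smult (of_nat (m - 1)) [:t, 1:]
      + smult (of_nat (impp m p)) [:1, 1:] + smult (of_nat (impe m p - impp m p)) [:t, 1:]) * W"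
    by (simp only: sum_position_weight[OF m])
  also have "\<dots> = ([:x + of_nat (m - 1) * z:] + smult (of_nat (m - 1)) [:t, 1:]) * W
      + (smult (of_nat (impe m p - impp m p)) ([:t, 1:] * W) + smult (of_nat (impp m p)) ([:1, 1:] * W))"
    by (simp only: distrib_right mult_smult_left add_ac)
  also have "smult (of_nat (impe m p - impp m p)) ([:t, 1:] * W) + smult (of_nat (impp m p)) ([:1, 1:] * W)
      = [:t, 1:] * [:1, 1:] * pderiv W"
    unfolding W_def tree_weight_def
    by (rule pderiv_powers_linear[symmetric]) (simp_all add: pderiv_pCons)
  also have "[:x + of_nat (m - 1) * z:] + smult (of_nat (m - 1)) [:t, 1:]
      = [:x + of_nat (m - 1) * z + of_nat (m - 1) * t, of_nat (m - 1):]"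
    by simp
  finally show ?thesis by (simp only: W_def)
qed

end

lemma sum_tree_weight_Suc:
  assumes m: "2 \<le> m"
  shows "(\<Sum>q\<in>cayley_trees (Suc m). tree_weight x z t (Suc m) q)
    = [:x + of_nat (m - 1) * z + of_nat (m - 1) * t, of_nat (m - 1):]
        * (\<Sum>p\<in>cayley_trees m. tree_weight x z t m p)
      + [:t, 1:] * [:1, 1:] * pderiv (\<Sum>p\<in>cayley_trees m. tree_weight x z t m p)"
proof -
  have "(\<Sum>q\<in>cayley_trees (Suc m). tree_weight x z t (Suc m) q)
      = (\<Sum>(p, pos)\<in>(SIGMA p:cayley_trees m. positions m p). tree_weight x z t (Suc m) (insert_at m p pos))"
    using sum.reindex_bij_betw[OF bij_betw_insert_at, of m "tree_weight x z t (Suc m)"] m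
    by (simp add: case_prod_unfold)
  also have "\<dots> = (\<Sum>p\<in>cayley_trees m. \<Sum>pos\<in>positions m p. tree_weight x z t (Suc m) (insert_at m p pos))"
    by (rule sum.Sigma[symmetric]) (auto simp: finite_cayley_trees positions_def finite_improper_children)
  also have "\<dots> = (\<Sum>p\<in>cayley_trees m.
      [:x + of_nat (m - 1) * z + of_nat (m - 1) * t, of_nat (m - 1):] * tree_weight x z t m p
      + [:t, 1:] * [:1, 1:] * pderiv (tree_weight x z t m p))"
    using cayley_tree.sum_tree_weight_insert_at[OF _ m] by (simp add: cayley_tree_def)
  finally show ?thesis
    by (simp add: sum.distrib sum_distrib_left pderiv_sum)
qed

lemma Qpoly_shift_Suc:
  "pcompose (Qpoly (Suc (Suc k)) x z (t - 1)) [:1, 1:]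
   = [:x + of_nat (Suc k) * z + of_nat (Suc k) * t, of_nat (Suc k):]
       * pcompose (Qpoly (Suc k) x z (t - 1)) [:1, 1:]
     + [:t, 1:] * [:1, 1:] * pderiv (pcompose (Qpoly (Suc k) x z (t - 1)) [:1, 1:])"
proof -
  let ?q = "Qpoly (Suc k) x z (t - 1)"
  let ?n = "real (Suc k)"
  have "Qpoly (Suc (Suc k)) x z (t - 1)
      = [:x + ?n * z + (t - 1) * ?n, ?n:] * ?q + ([:t - 1, 1:] * [:0, 1:]) * pderiv ?q"
    by (simp add: Let_def mult.assoc)
  then have "pcompose (Qpoly (Suc (Suc k)) x z (t - 1)) [:1, 1:]
      = pcompose [:x + ?n * z + (t - 1) * ?n, ?n:] [:1, 1:] * pcompose ?q [:1, 1:]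
        + pcompose ([:t - 1, 1:] * [:0, 1:]) [:1, 1:] * pcompose (pderiv ?q) [:1, 1:]"
    by (simp only: pcompose_add pcompose_mult)
  also have "pcompose [:x + ?n * z + (t - 1) * ?n, ?n:] [:1, 1:] = [:x + ?n * z + ?n * t, ?n:]"
    by (simp add: pcompose_pCons algebra_simps)
  also have "pcompose ([:t - 1, 1:] * [:0, 1:]) [:1, 1:] = [:t, 1:] * [:1, 1:]"
    by (simp add: pcompose_mult pcompose_pCons algebra_simps)
  also have "pcompose (pderiv ?q) [:1, 1:] = pderiv (pcompose ?q [:1, 1:])"
    by (simp add: pderiv_pcompose pderiv_pCons)
  finally show ?thesis by simp
qed

lemma cayley_trees_2: "cayley_trees 2 = {\<lambda>v. if v = 2 then 1 else 0}"
proof (intro equalityI subsetI)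
  fix p assume p: "p \<in> cayley_trees 2"
  interpret cayley_tree 2 p by unfold_locales (rule p)
  have "p 2 = 1" using parent_in_range[of 2] parent_neq_self[of 2] by auto
  moreover have "p v = 0" if "v \<noteq> 2" for v using parent_outside[of v] that by auto
  ultimately show "p \<in> {\<lambda>v. if v = 2 then 1 else 0}" by auto
next
  fix p :: "nat \<Rightarrow> nat" assume "p \<in> {\<lambda>v. if v = 2 then 1 else 0}"
  moreover have "\<exists>k. ((\<lambda>v::nat. if v = 2 then 1 else 0 :: nat) ^^ k) v = 1" if "v \<in> {1..2}" for v :: nat
    using that by (cases "v = 1") (auto intro: exI[of _ 0] exI[of _ 1])
  ultimately show "p \<in> cayley_trees 2" by (auto simp: cayley_trees_def)
qed

lemma tree_weight_2: "p \<in> cayley_trees 2 \<Longrightarrow> tree_weight x z t 2 p = 1"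
proof -
  assume "p \<in> cayley_trees 2"
  then interpret cayley_tree 2 p by unfold_locales
  have "impe 2 p = 0" "root_deg 2 p = 1" "impp 2 p = 0"
    using impe_root_deg_bound root_deg_pos impp_le_impe by (auto simp: le_Suc_eq)
  then show ?thesis using lead_eq by (simp add: tree_weight_def)
qed

lemma Qpoly_shift_eq_sum_tree_weight:
  assumes "1 \<le> n"
  shows "pcompose (Qpoly n x z (t - 1)) [:1, 1:] = (\<Sum>p\<in>cayley_trees (n + 1). tree_weight x z t (n + 1) p)"
  using assms
proof (induction n rule: nat_induct_at_least)
  case base
  have "Qpoly 1 x z (t - 1) = [:1:]" by (simp add: one_pCons)
  moreover have "(\<lambda>v::nat. if v = 2 then 1 else 0 :: nat) \<in> cayley_trees 2"
    by (simp add: cayley_trees_2)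
  then have "tree_weight x z t 2 (\<lambda>v. if v = 2 then 1 else 0) = 1" by (rule tree_weight_2)
  ultimately show ?case
    unfolding one_add_one cayley_trees_2 by (simp add: one_pCons pcompose_const)
next
  case (Suc n)
  then obtain k where k: "n = Suc k" by (cases n) auto
  show ?case
    unfolding k Qpoly_shift_Suc using Suc.IH[unfolded k] sum_tree_weight_Suc[of "Suc k + 1" x z t] by simp
qed

theorem theorem13:
  fixes n :: nat and x y z t :: real
  assumes "n \<ge> 1"
  shows "R n x y z t =
    (\<Sum>p\<in>cayley_trees (n + 1).
        (y + 1) ^ (impe (n + 1) p - impp (n + 1) p)
      * (y + t) ^ impp (n + 1) p
      * x ^ (root_deg (n + 1) p - 1)
      * z ^ (lead (n + 1) p - root_deg (n + 1) p - 1))"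
proof -
  have "R n x y z t = poly (pcompose (Qpoly n x z (t - 1)) [:1, 1:]) y"
    by (simp add: R_def Q_def poly_pcompose add.commute)
  also have "\<dots> = (\<Sum>p\<in>cayley_trees (n + 1). poly (tree_weight x z t (n + 1) p) y)"
    by (simp add: Qpoly_shift_eq_sum_tree_weight[OF assms] poly_sum)
  finally show ?thesis
    by (simp add: tree_weight_def add.commute mult_ac)
qed

end
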